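(* Let $\widetilde\nabla$ be a canonical snm-connection on $\mathbb R^3$ determined by the unit constant vector field $\mathsf C$. Let $\vec w\in\mathbb R^3$ be a unit vector and $\gamma:I\to\mathbb R^3$ a curve parametrized by arc length contained in a plane orthogonal to $\vec w$, with unit normal $\mathbf n=\gamma'\times\vec w$ and curvature $\kappa$ defined by $\gamma''=\kappa\mathbf n$. Let $M$ be the cylindrical surface $\psi(s,t)=\gamma(s)+t\vec w$, $s\in I$, $t\in\mathbb R$. Then the sectional curvature of $M$ with respect to $\widetilde\nabla$ at $\psi(s,t)$ is $$K=\frac12\Big(\langle\vec w,\mathsf C\rangle^2+\langle\gamma'(s),\mathsf C\rangle^2-\kappa(s)\langle\mathbf n(s),\mathsf C\rangle\Big).$$
   Context: Let $\langle\cdot,\cdot\rangle$ be the Euclidean metric on $\mathbb R^3$ and $\widetilde\nabla^0$ its Levi-Civita connection (the ordinary directional derivative). Given a smooth vector field $\mathsf C$ on $\mathbb R^3$, the semi-symmetric non-metric connection (snm-connection) determined by $\mathsf C$ is $\widetilde\nabla_XY=\widetilde\nabla^0_XY+\langle \mathsf C,Y\rangle X$. It is called canonical if $\mathsf C$ is a constant vector field with $|\mathsf C|=1$. Its curvature tensor is $\widetilde R(X,Y)Z=\widetilde\nabla_X\widetilde\nabla_YZ-\widetilde\nabla_Y\widetilde\nabla_XZ-\widetilde\nabla_{[X,Y]}Z$. For a surface $M$ immersed in $\mathbb R^3$, the induced connection is $\nabla_XY=(\widetilde\nabla_XY)^{\top}$ (tangential component) for tangent vector fields $X,Y$, with curvature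 tensor $R$ defined by the same formula as $\widetilde R$, and the sectional curvature of $M$ with respect to $\widetilde\nabla$ at $p$ is $K(p)=\frac12\big(\langle R(e_1,e_2)e_2,e_1\rangle+\langle R(e_2,e_1)e_1,e_2\rangle\big)$ for an orthonormal basis $\{e_1,e_2\}$ of $T_pM$ (independent of the basis). *)

theory Defs
  imports "HOL-Analysis.Analysis" "HOL-Analysis.Cross3"
begin

text \<open>Surfaces are given by parametrizations psi :: real * real => real^3
  with coordinates (s,t); index 0 refers to s, index 1 to t.\<close>

definition pd :: "nat \<Rightarrow> (real \<times> real \<Rightarrow> real^3) \<Rightarrow> real \<times> real \<Rightarrow> real^3" where
  "pd i F u = (if i = 0 then vector_derivative (\<lambda>a. F (a, snd u)) (at (fst u))
               else vector_derivative (\<lambda>b. F (fst u, b)) (at (snd u)))"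

definition surf_normal :: "(real \<times> real \<Rightarrow> real^3) \<Rightarrow> real \<times> real \<Rightarrow> real^3" where
  "surf_normal psi u = (let c = cross3 (pd 0 psi u) (pd 1 psi u) in c /\<^sub>R norm c)"

definition tan_proj :: "(real \<times> real \<Rightarrow> real^3) \<Rightarrow> real \<times> real \<Rightarrow> real^3 \<Rightarrow> real^3" where
  "tan_proj psi u v = v - (v \<bullet> surf_normal psi u) *\<^sub>R surf_normal psi u"

definition tan_space :: "(real \<times> real \<Rightarrow> real^3) \<Rightarrow> real \<times> real \<Rightarrow> (real^3) set" where
  "tan_space psi u = span {pd 0 psi u, pd 1 psi u}"

text \<open>Induced connection of the snm-connection
  tilde-nabla_X Y = D_X Y + <C,Y> X, in direction of the coordinate field psi_i,
  applied to a vector field Y along psi: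
  nabla_{psi_i} Y = (d_i Y + <C,Y> psi_i)^T.\<close>
definition ind_conn :: "real^3 \<Rightarrow> (real \<times> real \<Rightarrow> real^3) \<Rightarrow> nat \<Rightarrow> (real \<times> real \<Rightarrow> real^3)
    \<Rightarrow> real \<times> real \<Rightarrow> real^3" where
  "ind_conn C psi i Y u = tan_proj psi u (pd i Y u + (C \<bullet> Y u) *\<^sub>R pd i psi u)"

text \<open>Curvature on coordinate fields (their bracket vanishes):
  R(psi_i,psi_j) psi_k = nabla_i nabla_j psi_k - nabla_j nabla_i psi_k.\<close>
definition curv_coord :: "real^3 \<Rightarrow> (real \<times> real \<Rightarrow> real^3) \<Rightarrow> nat \<Rightarrow> nat \<Rightarrow> nat
    \<Rightarrow> real \<times> real \<Rightarrow> real^3" where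
  "curv_coord C psi i j k u =
     ind_conn C psi i (ind_conn C psi j (pd k psi)) u - ind_conn C psi j (ind_conn C psi i (pd k psi)) u"

text \<open>Coordinates of a tangent vector v = a psi_s + b psi_t (Gram-matrix formula).\<close>
definition tan_coord :: "(real \<times> real \<Rightarrow> real^3) \<Rightarrow> real \<times> real \<Rightarrow> real^3 \<Rightarrow> nat \<Rightarrow> real" where
  "tan_coord psi u v i =
    (let p = pd 0 psi u; q = pd 1 psi u;
         E = p \<bullet> p; F = p \<bullet> q; G = q \<bullet> q; D = E * G - F * F
     in if i = 0 then (G * (v \<bullet> p) - F * (v \<bullet> q)) / D
        else (E * (v \<bullet> q) - F * (v \<bullet> p)) / D)"

text \<open>Curvature tensor R(X,Y)Z of the induced connection at psi(u), for tangent vectors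
  X,Y,Z at psi(u), by tensoriality from the coordinate expression.\<close>
definition curv :: "real^3 \<Rightarrow> (real \<times> real \<Rightarrow> real^3) \<Rightarrow> real \<times> real
    \<Rightarrow> real^3 \<Rightarrow> real^3 \<Rightarrow> real^3 \<Rightarrow> real^3" where
  "curv C psi u X Y Z =
    (\<Sum>i<2. \<Sum>j<2. \<Sum>k<2. (tan_coord psi u X i * tan_coord psi u Y j * tan_coord psi u Z k)
        *\<^sub>R curv_coord C psi i j k u)"

definition sect_curv :: "real^3 \<Rightarrow> (real \<times> real \<Rightarrow> real^3) \<Rightarrow> real \<times> real
    \<Rightarrow> real^3 \<Rightarrow> real^3 \<Rightarrow> real" where
  "sect_curv C psi u e1 e2 =
    (1/2) * (curv C psi u e1 e2 e2 \<bullet> e1 + curv C psi u e2 e1 e1 \<bullet> e2)"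

end

theory Submission
  imports Defs
begin

text \<open>The coordinate fields \<open>\<psi>\<^sub>s = \<gamma>'\<close> and \<open>\<psi>\<^sub>t = w\<close> of the cylinder are orthonormal
  with unit normal \<open>n = \<gamma>' \<times> w\<close>, so the Gram matrix is the identity and for every orthonormal
  basis of the tangent plane
  \<open>K = \<onehalf>(\<langle>R(\<psi>\<^sub>s,\<psi>\<^sub>t)\<psi>\<^sub>t,\<psi>\<^sub>s\<rangle> - \<langle>R(\<psi>\<^sub>s,\<psi>\<^sub>t)\<psi>\<^sub>s,\<psi>\<^sub>t\<rangle>)\<close>.
  The only non-vanishing second derivative of \<open>\<psi>\<close> is \<open>\<psi>\<^sub>s\<^sub>s = \<kappa> n\<close>, which is normal and
  is removed by the projection; hence \<open>\<nabla>\<^sub>i\<psi>\<^sub>j = \<langle>C,\<psi>\<^sub>j\<rangle>\<psi>\<^sub>i\<close>. Differentiating once more,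
  the curvature term \<open>\<kappa>\<langle>C,n\<rangle>\<close> enters only through \<open>\<langle>C,\<gamma>'\<rangle>' = \<kappa>\<langle>C,n\<rangle>\<close>.\<close>

(* Coordinate indices of pd and curv_coord are written 0 and 1: keep the simplifier from
   rewriting 1 to Suc 0, which would block the coordinate lemmas below. *)
declare One_nat_def [simp del]

lemma vector_derivative_at_eq_on_open:
  fixes f g :: "real \<Rightarrow> 'a::real_normed_vector"
  assumes "open I" "a \<in> I" "\<And>x. x \<in> I \<Longrightarrow> f x = g x" "(g has_vector_derivative g') (at a)"
  shows "vector_derivative f (at a) = g'"
  by (rule vector_derivative_at, rule has_vector_derivative_transform_within_open[OF assms(4,1,2)])
     (simp add: assms(3))

lemma derivative_orthogonal_if_inner_const:
  fixes f f' :: "real \<Rightarrow> 'a::real_inner"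
  assumes "open I" "a \<in> I" "\<And>x. x \<in> I \<Longrightarrow> (f has_vector_derivative f' x) (at x)"
    and "\<And>x. x \<in> I \<Longrightarrow> f x \<bullet> w = c"
  shows "f' a \<bullet> w = 0"
proof -
  have "((\<lambda>x. w \<bullet> f x) has_vector_derivative w \<bullet> f' a) (at a)"
    using bounded_linear.has_vector_derivative[OF bounded_linear_inner_right] assms(2,3) by blast
  then have "((\<lambda>x. c) has_vector_derivative w \<bullet> f' a) (at a)"
    by (rule has_vector_derivative_transform_within_open[OF _ assms(1,2)])
       (metis assms(4) inner_commute)
  then show ?thesis
    using vector_derivative_unique_at has_vector_derivative_const by (metis inner_commute)
qed

lemma pd_0_eq_on_open:
  assumes "open I" "a \<in> I" "\<And>x. x \<in> I \<Longrightarrow> F (x, b) = g x"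
    and "(g has_vector_derivative g') (at a)"
  shows "pd 0 F (a, b) = g'"
  unfolding pd_def using vector_derivative_at_eq_on_open[OF assms] by simp

lemma pd_1_eq_0_if_const:
  assumes "\<And>y. F (a, y) = c"
  shows "pd 1 F (a, b) = 0"
  unfolding pd_def by (simp add: assms)

lemma span_orthonormal_pair_expansion:
  fixes p q e :: "'a::real_inner"
  assumes "e \<in> span {p, q}" "p \<bullet> p = 1" "q \<bullet> q = 1" "p \<bullet> q = 0"
  shows "e = (e \<bullet> p) *\<^sub>R p + (e \<bullet> q) *\<^sub>R q"
proof -
  obtain k where "e - k *\<^sub>R p \<in> span {q}" using assms(1) span_breakdown_eq by blast
  then obtain m where "e - k *\<^sub>R p = m *\<^sub>R q" using span_singleton by auto
  then have e: "e = k *\<^sub>R p + m *\<^sub>R q" by (simp add: algebra_simps)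
  have "q \<bullet> p = 0" using assms(4) by (simp add: inner_commute)
  then have "e \<bullet> p = k" "e \<bullet> q = m"
    using assms(2-4) by (simp_all add: e inner_add_left)
  then show ?thesis using e by simp
qed

lemma curv_coord_same_direction: "curv_coord C psi i i k u = 0"
  by (simp add: curv_coord_def)

lemma curv_coord_swap: "curv_coord C psi j i k u = - curv_coord C psi i j k u"
  by (simp add: curv_coord_def)

lemma tan_coord_orthonormal:
  assumes "pd 0 psi u \<bullet> pd 0 psi u = 1" "pd 1 psi u \<bullet> pd 1 psi u = 1"
    and "pd 0 psi u \<bullet> pd 1 psi u = 0"
  shows "tan_coord psi u v 0 = v \<bullet> pd 0 psi u" "tan_coord psi u v 1 = v \<bullet> pd 1 psi u"
  using assms by (simp_all add: tan_coord_def Let_def)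

lemma curv_orthonormal_coordinates:
  fixes psi :: "real \<times> real \<Rightarrow> real^3" and u :: "real \<times> real"
  defines "p \<equiv> pd 0 psi u" and "q \<equiv> pd 1 psi u"
  assumes "p \<bullet> p = 1" "q \<bullet> q = 1" "p \<bullet> q = 0"
  shows "curv C psi u X Y Z =
    ((X \<bullet> p) * (Y \<bullet> q) - (X \<bullet> q) * (Y \<bullet> p)) *\<^sub>R
      ((Z \<bullet> p) *\<^sub>R curv_coord C psi 0 1 0 u + (Z \<bullet> q) *\<^sub>R curv_coord C psi 0 1 1 u)"
proof -
  have "{..<2::nat} = {0, 1}" by auto
  then show ?thesis
    using tan_coord_orthonormal[OF assms(3-5)[unfolded p_def q_def]]
    by (simp add: curv_def curv_coord_same_direction curv_coord_swap[of C psi 1 0] p_def q_def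
        algebra_simps)
qed

lemma sect_curv_orthonormal_coordinates:
  fixes psi :: "real \<times> real \<Rightarrow> real^3" and u :: "real \<times> real"
  defines "p \<equiv> pd 0 psi u" and "q \<equiv> pd 1 psi u"
  assumes "p \<bullet> p = 1" "q \<bullet> q = 1" "p \<bullet> q = 0"
    and "e1 \<in> tan_space psi u" "e2 \<in> tan_space psi u"
    and "norm e1 = 1" "norm e2 = 1" "e1 \<bullet> e2 = 0"
  shows "sect_curv C psi u e1 e2
    = (curv_coord C psi 0 1 1 u \<bullet> p - curv_coord C psi 0 1 0 u \<bullet> q) / 2"
proof -
  have qp: "q \<bullet> p = 0" using assms(5) by (simp add: inner_commute)
  define x1 y1 x2 y2 where "x1 = e1 \<bullet> p" "y1 = e1 \<bullet> q" "x2 = e2 \<bullet> p" "y2 = e2 \<bullet> q"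
  have e1: "e1 = x1 *\<^sub>R p + y1 *\<^sub>R q" and e2: "e2 = x2 *\<^sub>R p + y2 *\<^sub>R q"
    using span_orthonormal_pair_expansion assms(3-7)
    unfolding x1_y1_x2_y2_def tan_space_def p_def q_def by blast+
  have "e1 \<bullet> e1 = x1 * x1 + y1 * y1" "e2 \<bullet> e2 = x2 * x2 + y2 * y2"
    "e1 \<bullet> e2 = x1 * x2 + y1 * y2"
    by (subst e1 e2, subst e1 e2, simp add: inner_add_left inner_add_right assms(3-5) qp)+
  then have "x1 * x1 + y1 * y1 = 1" "x2 * x2 + y2 * y2 = 1" "x1 * x2 + y1 * y2 = 0"
    using assms(8-10) by (simp_all add: dot_square_norm)
  moreover have "(x1 * y2 - x2 * y1)\<^sup>2
      = (x1 * x1 + y1 * y1) * (x2 * x2 + y2 * y2) - (x1 * x2 + y1 * y2)\<^sup>2"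
    by algebra
  ultimately have det: "(x1 * y2 - x2 * y1)\<^sup>2 = 1"
    by simp
  have along: "v \<bullet> e1 = x1 * (v \<bullet> p) + y1 * (v \<bullet> q)" "v \<bullet> e2 = x2 * (v \<bullet> p) + y2 * (v \<bullet> q)"
    for v by (subst e1 e2, simp add: inner_add_right)+
  have "sect_curv C psi u e1 e2
      = (x1 * y2 - x2 * y1)\<^sup>2 * (curv_coord C psi 0 1 1 u \<bullet> p - curv_coord C psi 0 1 0 u \<bullet> q) / 2"
    unfolding sect_curv_def
      curv_orthonormal_coordinates[OF assms(3-5)[unfolded p_def q_def], folded p_def q_def]
    by (simp add: along inner_add_left x1_y1_x2_y2_def[symmetric]
        inner_commute[of _ e1] inner_commute[of _ e2])
       algebra
  then show ?thesis
    by (simp add: det)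
qed

locale plane_curve_cylinder =
  fixes gamma T T' :: "real \<Rightarrow> real^3" and kappa :: "real \<Rightarrow> real"
    and w :: "real^3" and I :: "real set" and c :: real
  assumes open_I: "open I"
    and gamma_deriv: "\<And>x. x \<in> I \<Longrightarrow> (gamma has_vector_derivative T x) (at x)"
    and T_deriv: "\<And>x. x \<in> I \<Longrightarrow> (T has_vector_derivative T' x) (at x)"
    and unit_T: "\<And>x. x \<in> I \<Longrightarrow> norm (T x) = 1"
    and unit_w: "norm w = 1"
    and planar: "\<And>x. x \<in> I \<Longrightarrow> gamma x \<bullet> w = c"
    and curvature: "\<And>x. x \<in> I \<Longrightarrow> T' x = kappa x *\<^sub>R cross3 (T x) w"
begin

definition cyl :: "real \<times> real \<Rightarrow> real^3" where
  "cyl = (\<lambda>(a, b). gamma a + b *\<^sub>R w)"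

definition N :: "real \<Rightarrow> real^3" where
  "N a = cross3 (T a) w"

lemma frame_orthonormal:
  assumes "a \<in> I"
  shows "T a \<bullet> T a = 1" "w \<bullet> w = 1" "N a \<bullet> N a = 1"
    and "T a \<bullet> w = 0" "w \<bullet> T a = 0" "N a \<bullet> T a = 0" "T a \<bullet> N a = 0"
    and "N a \<bullet> w = 0" "w \<bullet> N a = 0"
proof -
  show "T a \<bullet> T a = 1" "w \<bullet> w = 1"
    using unit_T[OF assms] unit_w by (simp_all add: dot_square_norm)
  show Tw: "T a \<bullet> w = 0" and "w \<bullet> T a = 0"
    using derivative_orthogonal_if_inner_const[OF open_I assms gamma_deriv planar]
    by (simp_all add: inner_commute)
  have "(norm (N a))\<^sup>2 = 1"
    using norm_cross_dot[of "T a" w] unit_T[OF assms] unit_w Tw by (simp add: N_def)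
  then show "N a \<bullet> N a = 1" by (simp add: power2_norm_eq_inner)
  show "N a \<bullet> T a = 0" "T a \<bullet> N a = 0" "N a \<bullet> w = 0" "w \<bullet> N a = 0"
    unfolding N_def using dot_cross_self by (auto simp: inner_commute)
qed

lemma pd_cyl:
  shows "a \<in> I \<Longrightarrow> pd 0 cyl (a, b) = T a" and "pd 1 cyl (a, b) = w"
  unfolding pd_def cyl_def using gamma_deriv
  by (auto intro!: vector_derivative_at derivative_eq_intros)

lemma tan_proj_cyl:
  assumes "a \<in> I"
  shows "tan_proj cyl (a, b) v = v - (v \<bullet> N a) *\<^sub>R N a"
proof -
  have "surf_normal cyl (a, b) = N a"
    using frame_orthonormal(3)[OF assms, folded norm_eq_1]
    by (simp add: surf_normal_def pd_cyl assms N_def[symmetric] Let_def)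
  then show ?thesis by (simp add: tan_proj_def)
qed

lemma ind_conn_cyl_coordinate_fields:
  assumes "a \<in> I"
  shows "ind_conn C cyl 0 (pd 0 cyl) (a, b) = (C \<bullet> T a) *\<^sub>R T a"
    and "ind_conn C cyl 0 (pd 1 cyl) (a, b) = (C \<bullet> w) *\<^sub>R T a"
    and "ind_conn C cyl 1 (pd 0 cyl) (a, b) = (C \<bullet> T a) *\<^sub>R w"
    and "ind_conn C cyl 1 (pd 1 cyl) (a, b) = (C \<bullet> w) *\<^sub>R w"
proof -
  have T_deriv_normal: "(T has_vector_derivative kappa a *\<^sub>R N a) (at a)"
    using T_deriv[OF assms] curvature[OF assms] by (simp add: N_def)
  have "pd 0 (pd 0 cyl) (a, b) = kappa a *\<^sub>R N a"
    by (rule pd_0_eq_on_open[OF open_I _ _ T_deriv_normal]) (simp_all add: assms pd_cyl)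
  moreover have "pd 0 (pd 1 cyl) (a, b) = 0" and "pd 1 (pd 0 cyl) (a, b) = 0"
    and "pd 1 (pd 1 cyl) (a, b) = 0"
    by (rule pd_1_eq_0_if_const pd_0_eq_on_open[OF open_I, where g = "\<lambda>_. w"];
        simp add: pd_cyl assms)+
  ultimately show "ind_conn C cyl 0 (pd 0 cyl) (a, b) = (C \<bullet> T a) *\<^sub>R T a"
    "ind_conn C cyl 0 (pd 1 cyl) (a, b) = (C \<bullet> w) *\<^sub>R T a"
    "ind_conn C cyl 1 (pd 0 cyl) (a, b) = (C \<bullet> T a) *\<^sub>R w"
    "ind_conn C cyl 1 (pd 1 cyl) (a, b) = (C \<bullet> w) *\<^sub>R w"
    using frame_orthonormal[OF assms]
    by (simp_all add: ind_conn_def tan_proj_cyl assms pd_cyl inner_add_left algebra_simps)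
qed

lemma curv_coord_cyl:
  assumes "a \<in> I"
  shows "curv_coord C cyl 0 1 0 (a, b)
      = (kappa a * (C \<bullet> N a) - (C \<bullet> T a)\<^sup>2) *\<^sub>R w + ((C \<bullet> T a) * (C \<bullet> w)) *\<^sub>R T a"
    and "curv_coord C cyl 0 1 1 (a, b) = (C \<bullet> w)\<^sup>2 *\<^sub>R T a - ((C \<bullet> w) * (C \<bullet> T a)) *\<^sub>R w"
proof -
  have "((\<lambda>x. C \<bullet> T x) has_real_derivative C \<bullet> T' a) (at a)"
    using bounded_linear.has_vector_derivative[OF bounded_linear_inner_right T_deriv[OF assms]]
    by (simp add: has_real_derivative_iff_has_vector_derivative)
  then have field_deriv:
      "((\<lambda>x. (C \<bullet> T x) *\<^sub>R w) has_vector_derivative (kappa a * (C \<bullet> N a)) *\<^sub>R w) (at a)"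
    by (auto intro!: has_vector_derivative_scaleR[THEN has_vector_derivative_eq_rhs]
        simp: curvature assms N_def)
  have "pd 0 (ind_conn C cyl 1 (pd 0 cyl)) (a, b) = (kappa a * (C \<bullet> N a)) *\<^sub>R w"
    by (rule pd_0_eq_on_open[OF open_I assms _ field_deriv])
       (simp add: ind_conn_cyl_coordinate_fields)
  moreover have "pd 0 (ind_conn C cyl 1 (pd 1 cyl)) (a, b) = 0"
    by (rule pd_0_eq_on_open[OF open_I assms, where g = "\<lambda>_. (C \<bullet> w) *\<^sub>R w"])
       (simp_all add: ind_conn_cyl_coordinate_fields)
  moreover have "pd 1 (ind_conn C cyl 0 (pd 0 cyl)) (a, b) = 0"
    and "pd 1 (ind_conn C cyl 0 (pd 1 cyl)) (a, b) = 0"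
    by (rule pd_1_eq_0_if_const; simp add: ind_conn_cyl_coordinate_fields[OF assms])+
  ultimately show "curv_coord C cyl 0 1 0 (a, b)
      = (kappa a * (C \<bullet> N a) - (C \<bullet> T a)\<^sup>2) *\<^sub>R w + ((C \<bullet> T a) * (C \<bullet> w)) *\<^sub>R T a"
    and "curv_coord C cyl 0 1 1 (a, b) = (C \<bullet> w)\<^sup>2 *\<^sub>R T a - ((C \<bullet> w) * (C \<bullet> T a)) *\<^sub>R w"
    using frame_orthonormal[OF assms]
    by (simp_all add: curv_coord_def ind_conn_def[of C cyl _ "ind_conn C cyl _ _"] tan_proj_cyl
        assms pd_cyl ind_conn_cyl_coordinate_fields inner_add_left inner_diff_left power2_eq_square
        algebra_simps)
qed

end

theorem theorem3p1:
  fixes C w :: "real^3" and gamma g1 g2 g3 :: "real \<Rightarrow> real^3"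
    and kappa :: "real \<Rightarrow> real" and I :: "real set" and s t :: real and e1 e2 :: "real^3"
  assumes "norm C = 1"
    and "norm w = 1"
    and "open I" and "is_interval I"
    and "\<forall>x\<in>I. (gamma has_vector_derivative g1 x) (at x)"
    and "\<forall>x\<in>I. (g1 has_vector_derivative g2 x) (at x)"
    and "\<forall>x\<in>I. (g2 has_vector_derivative g3 x) (at x)"
    and "\<forall>x\<in>I. norm (g1 x) = 1"
    and "\<exists>c. \<forall>x\<in>I. gamma x \<bullet> w = c"
    and "\<forall>x\<in>I. g2 x = kappa x *\<^sub>R cross3 (g1 x) w"
    and "s \<in> I"
    and "e1 \<in> tan_space (\<lambda>(a, b). gamma a + b *\<^sub>R w) (s, t)"
    and "e2 \<in> tan_space (\<lambda>(a, b). gamma a + b *\<^sub>R w) (s, t)"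
    and "norm e1 = 1" and "norm e2 = 1" and "e1 \<bullet> e2 = 0"
  shows "sect_curv C (\<lambda>(a, b). gamma a + b *\<^sub>R w) (s, t) e1 e2
       = (1/2) * ((w \<bullet> C)\<^sup>2 + (g1 s \<bullet> C)\<^sup>2 - kappa s * (cross3 (g1 s) w \<bullet> C))"
proof -
  obtain c where "\<forall>x\<in>I. gamma x \<bullet> w = c" using assms(9) by blast
  then interpret plane_curve_cylinder gamma g1 g2 kappa w I c
    using assms(2,3,5,6,8,10) by unfold_locales auto
  have cyl: "(\<lambda>(a, b). gamma a + b *\<^sub>R w) = cyl" by (simp add: cyl_def)
  note frame = frame_orthonormal[OF \<open>s \<in> I\<close>]
  have "sect_curv C cyl (s, t) e1 e2
      = (curv_coord C cyl 0 1 1 (s, t) \<bullet> g1 s - curv_coord C cyl 0 1 0 (s, t) \<bullet> w) / 2"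
    using sect_curv_orthonormal_coordinates[of cyl "(s, t)"] assms(12-16) frame
    by (simp add: cyl pd_cyl \<open>s \<in> I\<close>)
  also have "\<dots> = ((C \<bullet> w)\<^sup>2 + (C \<bullet> g1 s)\<^sup>2 - kappa s * (C \<bullet> N s)) / 2"
    using frame by (simp add: curv_coord_cyl \<open>s \<in> I\<close> inner_add_left inner_diff_left)
  finally show ?thesis
    by (simp add: cyl N_def inner_commute)
qed

end
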